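(* Let $(Y,\cdot)$ be a strong order-preserving partial action of a monoid $T$ on a semilattice $Y$. Then there is a globalisation $(\kappa,\mathcal{X},\bullet)$ of $(Y,\cdot)$ such that $\mathcal{X}$ is a semilattice with identity, $\kappa:Y\to\mathcal{X}$ is an (injective) semilattice morphism, and $(\mathcal{X},\bullet)$ is an order-preserving action of $T$.
   Context: A semilattice is a commutative semigroup of idempotents, viewed as a poset via $e\le f$ iff $ef=e$. A partial action of a monoid $T$ on a set $X$ is a partial map $T\times X\to X$, $(t,x)\mapsto t\cdot x$, such that $1\cdot x$ is defined and equals $x$, and whenever $t\cdot x$ and $s\cdot(t\cdot x)$ are defined, $st\cdot x$ is defined and equals $s\cdot(t\cdot x)$. It is an action if always defined; strong if whenever $t\cdot x$ and $st\cdot x$ are defined then $s\cdot(t\cdot x)$ is defined; order-preserving (on a poset) if whenever $x\le y$ and $t\cdot y$ is defined then $t\cdot x$ is defined and $t\cdot x\le t\cdot y$. A globalisation of $(X,\cdot)$ is a triple $(\iota,\mathbf{X},\ast)$ with $\iota:X\to\mathbf{X}$ injective and $(\mathbf{X},\ast)$ an action of $T$ such that $t\cdot x$ is defined iff $t\ast x\iota\in X\iota$, and then $(t\cdot x)\iota=t\ast x\iota$. *)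

theory Defs
  imports Main
begin

definition semilattice_on :: "'a set \<Rightarrow> ('a \<Rightarrow> 'a \<Rightarrow> 'a) \<Rightarrow> bool" where
  "semilattice_on Y m \<longleftrightarrow>
     (\<forall>x\<in>Y. \<forall>y\<in>Y. m x y \<in> Y) \<and>
     (\<forall>x\<in>Y. \<forall>y\<in>Y. \<forall>z\<in>Y. m (m x y) z = m x (m y z)) \<and>
     (\<forall>x\<in>Y. \<forall>y\<in>Y. m x y = m y x) \<and>
     (\<forall>x\<in>Y. m x x = x)"

definition sl_le :: "('a \<Rightarrow> 'a \<Rightarrow> 'a) \<Rightarrow> 'a \<Rightarrow> 'a \<Rightarrow> bool" where
  "sl_le m e f \<longleftrightarrow> m e f = e"

definition semilattice_with_identity :: "'a set \<Rightarrow> ('a \<Rightarrow> 'a \<Rightarrow> 'a) \<Rightarrow> bool" where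
  "semilattice_with_identity X m \<longleftrightarrow>
     semilattice_on X m \<and> (\<exists>e\<in>X. \<forall>x\<in>X. m e x = x \<and> m x e = x)"

definition semilattice_morphism ::
  "'a set \<Rightarrow> ('a \<Rightarrow> 'a \<Rightarrow> 'a) \<Rightarrow> 'b set \<Rightarrow> ('b \<Rightarrow> 'b \<Rightarrow> 'b) \<Rightarrow> ('a \<Rightarrow> 'b) \<Rightarrow> bool" where
  "semilattice_morphism Y m X n f \<longleftrightarrow>
     (\<forall>x\<in>Y. f x \<in> X) \<and> (\<forall>x\<in>Y. \<forall>y\<in>Y. f (m x y) = n (f x) (f y))"

(* Partial action of the monoid 't on the set Y: act t x = Some (t\<cdot>x) when defined, None otherwise *)
definition partial_action :: "'a set \<Rightarrow> ('t::monoid_mult \<Rightarrow> 'a \<Rightarrow> 'a option) \<Rightarrow> bool" where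
  "partial_action Y act \<longleftrightarrow>
     (\<forall>t. \<forall>x\<in>Y. \<forall>y. act t x = Some y \<longrightarrow> y \<in> Y) \<and>
     (\<forall>x\<in>Y. act 1 x = Some x) \<and>
     (\<forall>s t. \<forall>x\<in>Y. \<forall>y z. act t x = Some y \<and> act s y = Some z \<longrightarrow> act (s * t) x = Some z)"

definition strong_partial_action :: "'a set \<Rightarrow> ('t::monoid_mult \<Rightarrow> 'a \<Rightarrow> 'a option) \<Rightarrow> bool" where
  "strong_partial_action Y act \<longleftrightarrow>
     partial_action Y act \<and>
     (\<forall>s t. \<forall>x\<in>Y. \<forall>y. act t x = Some y \<and> act (s * t) x \<noteq> None \<longrightarrow> act s y \<noteq> None)"

definition order_preserving_partial_action ::
  "'a set \<Rightarrow> ('a \<Rightarrow> 'a \<Rightarrow> 'a) \<Rightarrow> ('t::monoid_mult \<Rightarrow> 'a \<Rightarrow> 'a option) \<Rightarrow> bool" where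
  "order_preserving_partial_action Y m act \<longleftrightarrow>
     partial_action Y act \<and>
     (\<forall>t. \<forall>x\<in>Y. \<forall>y\<in>Y. \<forall>y'. sl_le m x y \<and> act t y = Some y' \<longrightarrow>
        (\<exists>x'. act t x = Some x' \<and> sl_le m x' y'))"

definition monoid_action :: "'x set \<Rightarrow> ('t::monoid_mult \<Rightarrow> 'x \<Rightarrow> 'x) \<Rightarrow> bool" where
  "monoid_action X act \<longleftrightarrow>
     (\<forall>t. \<forall>x\<in>X. act t x \<in> X) \<and>
     (\<forall>x\<in>X. act 1 x = x) \<and>
     (\<forall>s t. \<forall>x\<in>X. act (s * t) x = act s (act t x))"

definition order_preserving_action ::
  "'x set \<Rightarrow> ('x \<Rightarrow> 'x \<Rightarrow> 'x) \<Rightarrow> ('t::monoid_mult \<Rightarrow> 'x \<Rightarrow> 'x) \<Rightarrow> bool" where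
  "order_preserving_action X n act \<longleftrightarrow>
     monoid_action X act \<and>
     (\<forall>t. \<forall>x\<in>X. \<forall>y\<in>X. sl_le n x y \<longrightarrow> sl_le n (act t x) (act t y))"

definition globalisation ::
  "'a set \<Rightarrow> ('t::monoid_mult \<Rightarrow> 'a \<Rightarrow> 'a option) \<Rightarrow> ('a \<Rightarrow> 'x) \<Rightarrow> 'x set \<Rightarrow> ('t \<Rightarrow> 'x \<Rightarrow> 'x) \<Rightarrow> bool" where
  "globalisation Y act \<iota> X gact \<longleftrightarrow>
     inj_on \<iota> Y \<and> \<iota> ` Y \<subseteq> X \<and> monoid_action X gact \<and>
     (\<forall>t. \<forall>x\<in>Y. (act t x \<noteq> None \<longleftrightarrow> gact t (\<iota> x) \<in> \<iota> ` Y) \<and>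
                 (\<forall>y. act t x = Some y \<longrightarrow> \<iota> y = gact t (\<iota> x)))"

end

theory Submission
  imports Defs
begin

(* A formal product r\<cdot>w (r \<in> T, w \<in> Y) of the universal globalisation is represented by
   its germ, the partial map s \<mapsto> (s r)\<cdot>w.  Strongness says exactly that the germ of r\<cdot>w is
   the germ of 1\<cdot>(r\<cdot>w) whenever r\<cdot>w is defined.  Germs, ordered pointwise, form a poset on
   which T acts monotonically by translation; its down-sets form a semilattice under
   intersection, acted on by D \<mapsto> down-closure of t D, and \<kappa> y is the principal down-set of
   the germ of 1\<cdot>y.  Then t acting on \<kappa> x is the principal down-set of the germ of t\<cdot>x,
   which is some \<kappa> z iff t\<cdot>x is defined.  Order-preservation of the partial action makes
   y \<mapsto> germ of 1\<cdot>y an order embedding with downward closed image, so \<kappa> turns products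
   into intersections. *)

lemma sl_le_refl: "semilattice_on Y m \<Longrightarrow> x \<in> Y \<Longrightarrow> sl_le m x x"
  unfolding semilattice_on_def sl_le_def by blast

lemma sl_le_trans:
  "semilattice_on Y m \<Longrightarrow> x \<in> Y \<Longrightarrow> y \<in> Y \<Longrightarrow> z \<in> Y \<Longrightarrow> sl_le m x y \<Longrightarrow> sl_le m y z
    \<Longrightarrow> sl_le m x z"
  unfolding semilattice_on_def sl_le_def by metis

lemma sl_le_antisym:
  "semilattice_on Y m \<Longrightarrow> x \<in> Y \<Longrightarrow> y \<in> Y \<Longrightarrow> sl_le m x y \<Longrightarrow> sl_le m y x \<Longrightarrow> x = y"
  unfolding semilattice_on_def sl_le_def by metis

lemma sl_le_meet_left: "semilattice_on Y m \<Longrightarrow> x \<in> Y \<Longrightarrow> y \<in> Y \<Longrightarrow> sl_le m (m x y) x"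
  unfolding semilattice_on_def sl_le_def by metis

lemma sl_le_meet_right: "semilattice_on Y m \<Longrightarrow> x \<in> Y \<Longrightarrow> y \<in> Y \<Longrightarrow> sl_le m (m x y) y"
  unfolding semilattice_on_def sl_le_def by metis

lemma sl_le_meet_greatest:
  "semilattice_on Y m \<Longrightarrow> w \<in> Y \<Longrightarrow> x \<in> Y \<Longrightarrow> y \<in> Y \<Longrightarrow> sl_le m w x \<Longrightarrow> sl_le m w y
    \<Longrightarrow> sl_le m w (m x y)"
  unfolding semilattice_on_def sl_le_def by metis

lemma partial_action_closed: "partial_action Y act \<Longrightarrow> x \<in> Y \<Longrightarrow> act t x = Some y \<Longrightarrow> y \<in> Y"
  unfolding partial_action_def by blast

lemma partial_action_one: "partial_action Y act \<Longrightarrow> x \<in> Y \<Longrightarrow> act 1 x = Some x"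
  unfolding partial_action_def by blast

lemma partial_action_mult:
  "partial_action Y act \<Longrightarrow> x \<in> Y \<Longrightarrow> act t x = Some y \<Longrightarrow> act s y = Some z
    \<Longrightarrow> act (s * t) x = Some z"
  unfolding partial_action_def by blast

lemma strong_partial_action_imp_partial_action:
  "strong_partial_action Y act \<Longrightarrow> partial_action Y act"
  unfolding strong_partial_action_def by blast

lemma strong_partial_actionD:
  "strong_partial_action Y act \<Longrightarrow> x \<in> Y \<Longrightarrow> act t x = Some y \<Longrightarrow> act (s * t) x \<noteq> None
    \<Longrightarrow> act s y \<noteq> None"
  unfolding strong_partial_action_def by blast

lemma order_preserving_partial_actionD:
  "order_preserving_partial_action Y m act \<Longrightarrow> x \<in> Y \<Longrightarrow> y \<in> Y \<Longrightarrow> sl_le m x y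
    \<Longrightarrow> act t y = Some y' \<Longrightarrow> \<exists>x'. act t x = Some x' \<and> sl_le m x' y'"
  unfolding order_preserving_partial_action_def by blast

definition down_sets :: "'u set \<Rightarrow> ('u \<Rightarrow> 'u \<Rightarrow> bool) \<Rightarrow> 'u set set" where
  "down_sets U le = {D. D \<subseteq> U \<and> (\<forall>x\<in>D. \<forall>y\<in>U. le y x \<longrightarrow> y \<in> D)}"

definition down_closure :: "'u set \<Rightarrow> ('u \<Rightarrow> 'u \<Rightarrow> bool) \<Rightarrow> 'u set \<Rightarrow> 'u set" where
  "down_closure U le A = {y \<in> U. \<exists>x\<in>A. le y x}"

definition down_set_action ::
  "'u set \<Rightarrow> ('u \<Rightarrow> 'u \<Rightarrow> bool) \<Rightarrow> ('t \<Rightarrow> 'u \<Rightarrow> 'u) \<Rightarrow> 't \<Rightarrow> 'u set \<Rightarrow> 'u set" where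
  "down_set_action U le f t D = down_closure U le (f t ` D)"

lemma semilattice_with_identity_down_sets: "semilattice_with_identity (down_sets U le) (\<inter>)"
proof -
  have "D \<inter> E \<in> down_sets U le" if "D \<in> down_sets U le" "E \<in> down_sets U le" for D E
    using that unfolding down_sets_def by blast
  moreover have "U \<in> down_sets U le" "\<forall>D \<in> down_sets U le. D \<subseteq> U"
    unfolding down_sets_def by blast+
  ultimately show ?thesis
    unfolding semilattice_with_identity_def semilattice_on_def
    by (intro conjI bexI[of _ U]) (auto simp: Int_assoc Int_absorb1 Int_absorb2)
qed

lemma down_closure_in_down_sets:
  "transp_on U le \<Longrightarrow> A \<subseteq> U \<Longrightarrow> down_closure U le A \<in> down_sets U le"
  unfolding down_sets_def down_closure_def transp_on_def by blast

lemma down_closure_down_set: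
  "reflp_on U le \<Longrightarrow> D \<in> down_sets U le \<Longrightarrow> down_closure U le D = D"
  unfolding down_sets_def down_closure_def reflp_on_def by blast

lemma down_closure_mono: "A \<subseteq> B \<Longrightarrow> down_closure U le A \<subseteq> down_closure U le B"
  unfolding down_closure_def by blast

lemma down_closure_image_down_closure:
  assumes "reflp_on U le" "transp_on U le" "monotone_on U le le f" "f ` U \<subseteq> U" "A \<subseteq> U"
  shows "down_closure U le (f ` down_closure U le A) = down_closure U le (f ` A)"
proof
  have "A \<subseteq> down_closure U le A"
    using assms(1,5) unfolding down_closure_def reflp_on_def by blast
  then show "down_closure U le (f ` A) \<subseteq> down_closure U le (f ` down_closure U le A)"
    by (intro down_closure_mono image_mono)
  show "down_closure U le (f ` down_closure U le A) \<subseteq> down_closure U le (f ` A)"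
  proof
    fix y assume "y \<in> down_closure U le (f ` down_closure U le A)"
    then obtain x' x where "y \<in> U" "x' \<in> U" "x \<in> A" "le y (f x')" "le x' x"
      unfolding down_closure_def by blast
    moreover from this have "le (f x') (f x)"
      using assms(3,5) unfolding monotone_on_def by blast
    ultimately have "le y (f x)"
      using transp_onD[OF assms(2)] assms(4,5) by blast
    then show "y \<in> down_closure U le (f ` A)"
      using \<open>y \<in> U\<close> \<open>x \<in> A\<close> unfolding down_closure_def by blast
  qed
qed

lemma monoid_action_closed: "monoid_action U f \<Longrightarrow> x \<in> U \<Longrightarrow> f t x \<in> U"
  unfolding monoid_action_def by blast

lemma monoid_action_one: "monoid_action U f \<Longrightarrow> x \<in> U \<Longrightarrow> f 1 x = x"
  unfolding monoid_action_def by blast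

lemma monoid_action_mult: "monoid_action U f \<Longrightarrow> x \<in> U \<Longrightarrow> f (s * t) x = f s (f t x)"
  unfolding monoid_action_def by blast

lemma order_preserving_action_down_sets:
  fixes U :: "'u set"
  assumes refl: "reflp_on U le" and trans: "transp_on U le"
    and action: "monoid_action U f" and mono: "\<And>t. monotone_on U le le (f t)"
  shows "order_preserving_action (down_sets U le) (\<inter>) (down_set_action U le f)"
  unfolding order_preserving_action_def monoid_action_def
proof (intro conjI allI ballI impI)
  fix t D assume "D \<in> down_sets U le"
  then have "f t ` D \<subseteq> U"
    using monoid_action_closed[OF action] unfolding down_sets_def by blast
  then show "down_set_action U le f t D \<in> down_sets U le"
    unfolding down_set_action_def using trans by (rule down_closure_in_down_sets[rotated])
next
  fix D assume D: "D \<in> down_sets U le"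
  then have "f 1 ` D = D"
    using monoid_action_one[OF action] unfolding down_sets_def by (simp add: subset_iff)
  then show "down_set_action U le f 1 D = D"
    unfolding down_set_action_def using down_closure_down_set[OF refl D] by simp
next
  fix s t D assume "D \<in> down_sets U le"
  then have D: "D \<subseteq> U" by (simp add: down_sets_def)
  then have "f (s * t) ` D = f s ` f t ` D"
    using monoid_action_mult[OF action] by (simp add: image_image subset_iff)
  moreover have "down_closure U le (f s ` down_closure U le (f t ` D)) =
      down_closure U le (f s ` f t ` D)"
    using monoid_action_closed[OF action] D
    by (intro down_closure_image_down_closure[OF refl trans mono]) blast+
  ultimately show "down_set_action U le f (s * t) D =
      down_set_action U le f s (down_set_action U le f t D)"
    unfolding down_set_action_def by simp
next
  fix t and D E :: "'u set" assume "sl_le (\<inter>) D E"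
  then have "D \<subseteq> E" unfolding sl_le_def by blast
  then show "sl_le (\<inter>) (down_set_action U le f t D) (down_set_action U le f t E)"
    unfolding sl_le_def down_set_action_def
    by (intro Int_absorb2 down_closure_mono image_mono)
qed

lemma down_set_action_principal:
  assumes "reflp_on U le" "transp_on U le" "monoid_action U f" "\<And>t. monotone_on U le le (f t)"
    and "x \<in> U"
  shows "down_set_action U le f t (down_closure U le {x}) = down_closure U le {f t x}"
proof -
  have "f t ` U \<subseteq> U" using monoid_action_closed[OF assms(3)] by blast
  then show ?thesis
    unfolding down_set_action_def
    using down_closure_image_down_closure[OF assms(1,2,4)] assms(5) by simp
qed

lemma inj_on_principal_down_set:
  "reflp_on U le \<Longrightarrow> antisymp_on U le \<Longrightarrow> inj_on (\<lambda>x. down_closure U le {x}) U"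
  unfolding inj_on_def down_closure_def reflp_on_def antisymp_on_def by blast

lemma principal_down_set_Int:
  assumes "transp_on U le" "a \<in> U" "b \<in> U" "c \<in> U" "le c a" "le c b"
    and "\<And>z. z \<in> U \<Longrightarrow> le z a \<Longrightarrow> le z b \<Longrightarrow> le z c"
  shows "down_closure U le {c} = down_closure U le {a} \<inter> down_closure U le {b}"
  using assms unfolding down_closure_def transp_on_def by blast

definition pointwise_le :: "('a \<Rightarrow> 'a \<Rightarrow> 'a) \<Rightarrow> ('t \<times> 'a) set \<Rightarrow> ('t \<times> 'a) set \<Rightarrow> bool" where
  "pointwise_le m G H \<longleftrightarrow> (\<forall>(s, z) \<in> H. \<exists>z'. (s, z') \<in> G \<and> sl_le m z' z)"

lemma pointwise_le_refl: "semilattice_on Y m \<Longrightarrow> Range G \<subseteq> Y \<Longrightarrow> pointwise_le m G G"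
  unfolding pointwise_le_def using sl_le_refl by fast

lemma pointwise_le_trans:
  assumes "semilattice_on Y m" "Range G \<subseteq> Y" "Range H \<subseteq> Y" "Range K \<subseteq> Y"
    and "pointwise_le m G H" "pointwise_le m H K"
  shows "pointwise_le m G K"
  unfolding pointwise_le_def
proof (intro ballI, clarify)
  fix s z assume "(s, z) \<in> K"
  then obtain z' where z': "(s, z') \<in> H" "sl_le m z' z"
    using assms(6) unfolding pointwise_le_def by blast
  then obtain z'' where z'': "(s, z'') \<in> G" "sl_le m z'' z'"
    using assms(5) unfolding pointwise_le_def by blast
  have "z \<in> Y" "z' \<in> Y" "z'' \<in> Y"
    using \<open>(s, z) \<in> K\<close> z' z'' assms(2-4) by blast+
  with z' z'' show "\<exists>z''. (s, z'') \<in> G \<and> sl_le m z'' z"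
    using sl_le_trans[OF assms(1)] by blast
qed

lemma pointwise_le_antisym:
  assumes "semilattice_on Y m" "Range G \<subseteq> Y" "Range H \<subseteq> Y" "single_valued G" "single_valued H"
    and "pointwise_le m G H" "pointwise_le m H G"
  shows "G = H"
proof -
  have "H \<subseteq> G" if "Range G \<subseteq> Y" "Range H \<subseteq> Y" "single_valued H"
      "pointwise_le m G H" "pointwise_le m H G" for G H :: "('t \<times> 'a) set"
  proof
    fix p assume "p \<in> H"
    then obtain s z where p: "p = (s, z)" "(s, z) \<in> H" by (cases p) auto
    then obtain z' where z': "(s, z') \<in> G" "sl_le m z' z"
      using \<open>pointwise_le m G H\<close> unfolding pointwise_le_def by blast
    then obtain z'' where "(s, z'') \<in> H" "sl_le m z'' z'"
      using \<open>pointwise_le m H G\<close> unfolding pointwise_le_def by blast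
    with p have "sl_le m z z'"
      using \<open>single_valued H\<close> by (auto dest: single_valuedD)
    then have "z = z'"
      using sl_le_antisym[OF assms(1)] z' p that(1,2) by blast
    with p z' show "p \<in> G" by simp
  qed
  with assms show ?thesis by blast
qed

definition shift :: "'t::monoid_mult \<Rightarrow> ('t \<times> 'a) set \<Rightarrow> ('t \<times> 'a) set" where
  "shift t G = {(s, z). (s * t, z) \<in> G}"

lemma shift_one [simp]: "shift 1 G = G"
  unfolding shift_def by simp

lemma shift_mult: "shift (s * t) G = shift s (shift t G)"
  unfolding shift_def by (simp add: mult.assoc)

lemma monotone_on_shift: "monotone_on U (pointwise_le m) (pointwise_le m) (shift t)"
  unfolding monotone_on_def pointwise_le_def shift_def by auto

definition germ :: "('t::monoid_mult \<Rightarrow> 'a \<Rightarrow> 'a option) \<Rightarrow> 't \<Rightarrow> 'a \<Rightarrow> ('t \<times> 'a) set" where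
  "germ act r w = {(s, z). act (s * r) w = Some z}"

definition germs :: "'a set \<Rightarrow> ('t::monoid_mult \<Rightarrow> 'a \<Rightarrow> 'a option) \<Rightarrow> ('t \<times> 'a) set set" where
  "germs Y act = {germ act r w | r w. w \<in> Y}"

lemma mem_germ [simp]: "(s, z) \<in> germ act r w \<longleftrightarrow> act (s * r) w = Some z"
  unfolding germ_def by simp

lemma germ_in_germs: "w \<in> Y \<Longrightarrow> germ act r w \<in> germs Y act"
  unfolding germs_def by blast

lemma shift_germ: "shift t (germ act r w) = germ act (t * r) w"
  unfolding shift_def germ_def by (simp add: mult.assoc)

lemma single_valued_germ: "single_valued (germ act r w)"
  by (rule single_valuedI) simp

lemma Range_germ: "partial_action Y act \<Longrightarrow> w \<in> Y \<Longrightarrow> Range (germ act r w) \<subseteq> Y"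
  by (auto intro: partial_action_closed)

lemma inj_on_germ_one: "partial_action Y act \<Longrightarrow> inj_on (germ act 1) Y"
  by (rule inj_onI) (metis mem_germ mult_1 option.inject partial_action_one)

lemma germ_eq_germ_one:
  assumes "strong_partial_action Y act" "w \<in> Y" "act r w = Some w'"
  shows "germ act r w = germ act 1 w'"
proof -
  have "act (s * r) w = act s w'" for s
  proof (cases "act s w'")
    case None
    then show ?thesis using strong_partial_actionD[OF assms] by metis
  next
    case (Some z)
    with assms show ?thesis
      using partial_action_mult[OF strong_partial_action_imp_partial_action] by metis
  qed
  then show ?thesis unfolding germ_def by simp
qed

lemma shift_in_germs:
  assumes "G \<in> germs Y act"
  shows "shift t G \<in> germs Y act"
proof -
  obtain r w where "G = germ act r w" "w \<in> Y" using assms unfolding germs_def by blast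
  then show ?thesis by (simp add: shift_germ germ_in_germs)
qed

lemma monoid_action_shift_germs: "monoid_action (germs Y act) shift"
  unfolding monoid_action_def by (simp add: shift_in_germs shift_mult)

lemma germs_partial_order:
  assumes "semilattice_on Y m" "partial_action Y act"
  shows "reflp_on (germs Y act) (pointwise_le m)" "transp_on (germs Y act) (pointwise_le m)"
    "antisymp_on (germs Y act) (pointwise_le m)"
proof -
  have Range: "Range G \<subseteq> Y" if "G \<in> germs Y act" for G
    using that Range_germ[OF assms(2)] unfolding germs_def by blast
  have single_valued: "single_valued G" if "G \<in> germs Y act" for G
    using that unfolding germs_def by (auto simp: single_valued_germ)
  show "reflp_on (germs Y act) (pointwise_le m)"
    by (rule reflp_onI) (rule pointwise_le_refl[OF assms(1) Range])
  show "transp_on (germs Y act) (pointwise_le m)"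
    by (rule transp_onI) (rule pointwise_le_trans[OF assms(1) Range Range Range])
  show "antisymp_on (germs Y act) (pointwise_le m)"
    by (rule antisymp_onI)
      (rule pointwise_le_antisym[OF assms(1) Range Range single_valued single_valued])
qed

lemma germ_one_le_iff:
  assumes "partial_action Y act" "order_preserving_partial_action Y m act" "x \<in> Y" "y \<in> Y"
  shows "pointwise_le m (germ act 1 x) (germ act 1 y) \<longleftrightarrow> sl_le m x y"
proof
  assume "pointwise_le m (germ act 1 x) (germ act 1 y)"
  moreover have "(1, y) \<in> germ act 1 y" using partial_action_one assms by simp
  ultimately show "sl_le m x y"
    unfolding pointwise_le_def using partial_action_one assms by fastforce
next
  assume "sl_le m x y"
  then show "pointwise_le m (germ act 1 x) (germ act 1 y)"
    unfolding pointwise_le_def using order_preserving_partial_actionD[OF assms(2-4)] by auto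
qed

lemma below_germ_one:
  assumes "strong_partial_action Y act" "G \<in> germs Y act" "x \<in> Y"
    and "pointwise_le m G (germ act 1 x)"
  shows "\<exists>w\<in>Y. G = germ act 1 w"
proof -
  obtain r v where G: "G = germ act r v" "v \<in> Y" using assms(2) unfolding germs_def by blast
  note pa = strong_partial_action_imp_partial_action[OF assms(1)]
  have "(1, x) \<in> germ act 1 x" using partial_action_one[OF pa assms(3)] by simp
  then obtain z where "(1, z) \<in> G" using assms(4) unfolding pointwise_le_def by blast
  then have "act r v = Some z" using G by simp
  then show ?thesis
    using G germ_eq_germ_one[OF assms(1)] partial_action_closed[OF pa] by blast
qed

lemma principal_germ_meet:
  assumes sl: "semilattice_on Y m" and strong: "strong_partial_action Y act"
    and op: "order_preserving_partial_action Y m act" and "x \<in> Y" "y \<in> Y"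
  shows "down_closure (germs Y act) (pointwise_le m) {germ act 1 (m x y)} =
    down_closure (germs Y act) (pointwise_le m) {germ act 1 x} \<inter>
    down_closure (germs Y act) (pointwise_le m) {germ act 1 y}"
proof -
  note pa = strong_partial_action_imp_partial_action[OF strong]
  have xy: "m x y \<in> Y" using sl \<open>x \<in> Y\<close> \<open>y \<in> Y\<close> unfolding semilattice_on_def by blast
  note le_iff = germ_one_le_iff[OF pa op]
  show ?thesis
  proof (rule principal_down_set_Int)
    show "transp_on (germs Y act) (pointwise_le m)" using germs_partial_order[OF sl pa] by blast
    show "germ act 1 x \<in> germs Y act" "germ act 1 y \<in> germs Y act" "germ act 1 (m x y) \<in> germs Y act"
      using assms(4,5) xy by (blast intro: germ_in_germs)+
    show "pointwise_le m (germ act 1 (m x y)) (germ act 1 x)"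
      "pointwise_le m (germ act 1 (m x y)) (germ act 1 y)"
      using le_iff xy assms(4,5) sl_le_meet_left[OF sl] sl_le_meet_right[OF sl] by blast+
  next
    fix G assume G: "G \<in> germs Y act" "pointwise_le m G (germ act 1 x)" "pointwise_le m G (germ act 1 y)"
    then obtain w where w: "w \<in> Y" "G = germ act 1 w"
      using below_germ_one[OF strong] \<open>x \<in> Y\<close> by blast
    then have "sl_le m w x" "sl_le m w y" using G le_iff assms(4,5) by blast+
    then have "sl_le m w (m x y)" using sl_le_meet_greatest[OF sl] w(1) assms(4,5) by blast
    then show "pointwise_le m G (germ act 1 (m x y))" using le_iff w xy by blast
  qed
qed

lemma globalisation_germ_down_sets:
  assumes sl: "semilattice_on Y m" and strong: "strong_partial_action Y act"
  defines "\<kappa> \<equiv> \<lambda>y. down_closure (germs Y act) (pointwise_le m) {germ act 1 y}"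
  shows "globalisation Y act \<kappa> (down_sets (germs Y act) (pointwise_le m))
    (down_set_action (germs Y act) (pointwise_le m) shift)"
proof -
  let ?U = "germs Y act" and ?le = "pointwise_le m"
  let ?gact = "down_set_action ?U ?le shift"
  note pa = strong_partial_action_imp_partial_action[OF strong]
  note order = germs_partial_order[OF sl pa]
  have germ_one: "germ act 1 ` Y \<subseteq> ?U" by (blast intro: germ_in_germs)
  have inj: "inj_on \<kappa> Y"
    unfolding \<kappa>_def using comp_inj_on[OF inj_on_germ_one[OF pa]
      inj_on_subset[OF inj_on_principal_down_set[OF order(1,3)] germ_one]]
    by (simp add: comp_def)
  have action_on_principal: "?gact t (\<kappa> x) = down_closure ?U ?le {germ act t x}" if "x \<in> Y" for t x
    unfolding \<kappa>_def
    using down_set_action_principal[OF order(1,2) monoid_action_shift_germs monotone_on_shift]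
      that by (simp add: germ_in_germs shift_germ)
  have defined: "?gact t (\<kappa> x) = \<kappa> y" if "x \<in> Y" "act t x = Some y" for t x y
    using action_on_principal germ_eq_germ_one[OF strong] that unfolding \<kappa>_def by simp
  have reflected: "act t x = Some z" if "x \<in> Y" "z \<in> Y" "?gact t (\<kappa> x) = \<kappa> z" for t x z
  proof -
    have "germ act t x = germ act 1 z"
      using inj_onD[OF inj_on_principal_down_set[OF order(1,3)]] that action_on_principal
      by (simp add: \<kappa>_def germ_in_germs)
    then have "(1, z) \<in> germ act t x" using partial_action_one[OF pa \<open>z \<in> Y\<close>] by simp
    then show ?thesis by simp
  qed
  have "act t x \<noteq> None \<longleftrightarrow> ?gact t (\<kappa> x) \<in> \<kappa> ` Y" if "x \<in> Y" for t x
    using defined reflected partial_action_closed[OF pa] that by fast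
  moreover have "\<kappa> ` Y \<subseteq> down_sets ?U ?le"
    unfolding \<kappa>_def using order(2) germ_one by (blast intro: down_closure_in_down_sets)
  moreover have "monoid_action (down_sets ?U ?le) ?gact"
    using order_preserving_action_down_sets[OF order(1,2) monoid_action_shift_germs monotone_on_shift]
    unfolding order_preserving_action_def by blast
  ultimately show ?thesis
    unfolding globalisation_def using inj defined by metis
qed

theorem mainTheorem5:
  fixes Y :: "'a set" and m :: "'a \<Rightarrow> 'a \<Rightarrow> 'a"
    and act :: "'t::monoid_mult \<Rightarrow> 'a \<Rightarrow> 'a option"
  assumes "semilattice_on Y m"
    and "strong_partial_action Y act"
    and "order_preserving_partial_action Y m act"
  shows "\<exists>(\<kappa> :: 'a \<Rightarrow> ('t \<times> 'a) set set) (X :: ('t \<times> 'a) set set set) n gact.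
           globalisation Y act \<kappa> X gact \<and>
           semilattice_with_identity X n \<and>
           semilattice_morphism Y m X n \<kappa> \<and> inj_on \<kappa> Y \<and>
           order_preserving_action X n gact"
proof -
  let ?U = "germs Y act" and ?le = "pointwise_le m"
  let ?\<kappa> = "\<lambda>y. down_closure ?U ?le {germ act 1 y}"
  note pa = strong_partial_action_imp_partial_action[OF assms(2)]
  note order = germs_partial_order[OF assms(1) pa]
  have glob: "globalisation Y act ?\<kappa> (down_sets ?U ?le) (down_set_action ?U ?le shift)"
    using globalisation_germ_down_sets[OF assms(1,2)] .
  then have "inj_on ?\<kappa> Y" "?\<kappa> ` Y \<subseteq> down_sets ?U ?le"
    unfolding globalisation_def by blast+
  show ?thesis
  proof (intro exI conjI)
    show "globalisation Y act ?\<kappa> (down_sets ?U ?le) (down_set_action ?U ?le shift)" by (fact glob)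
    show "semilattice_with_identity (down_sets ?U ?le) (\<inter>)"
      by (rule semilattice_with_identity_down_sets)
    show "semilattice_morphism Y m (down_sets ?U ?le) (\<inter>) ?\<kappa>"
      unfolding semilattice_morphism_def using \<open>?\<kappa> ` Y \<subseteq> _\<close> principal_germ_meet[OF assms]
      by blast
    show "inj_on ?\<kappa> Y" by fact
    show "order_preserving_action (down_sets ?U ?le) (\<inter>) (down_set_action ?U ?le shift)"
      by (rule order_preserving_action_down_sets[OF order(1,2) monoid_action_shift_germs
          monotone_on_shift])
  qed
qed

end
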